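(* Consider an execution of the convergence algorithm described in the context, with $n>5f$ robots of which at most $f$ are Byzantine and $m$ are correct, in the CORDA model under a fully asynchronous scheduler. Let $b>0$. Let $D_i$ be a destination computed by a correct robot $i$ in a cycle started at time $t$ (i.e., whose Look occurred at time $t$). If $D_i<\min UD(t)+b$, then at time $t$ at least $m-2f$ correct robots are located at positions $<\min UD(t)+2b$.
   Context: Setting: $n$ robots on the real line, at most $f$ Byzantine (arbitrary positions). Robots are anonymous, oblivious, have no common orientation, and have unlimited visibility with strong multiplicity detection. Correct robots run Look–Compute–Move cycles in the CORDA model, where phases of different robots interleave arbitrarily. Algorithm: with snapshot sorted $P_1\le\dots\le P_n$ and own position $x_i$, robot $i$ is elected iff $x_i\le P_{f+1}$ or $x_i\ge P_{n-f}$. If elected, its destination is the midpoint of $\min(x_i,P_{2f+1})$ and $\max(x_i,P_{n-2f})$, which is the center of $trim^i_{2f}(P)$ (remove, among the $2f$ smallest positions, those below $x_i$, and, among the $2f$ largest positions, those above $x_i$). Notation: the destination of a correct robot at time $t$ is the last destination it computed at or before $t$ (its position if none). $UD(t)$ is the multiset union of positions and destinations of all correct robots at time $t$. *)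

theory Defs
  imports Complex_Main "HOL-Library.Multiset"
begin

text \<open>Configuration at the Look time t. Robots are indexed 0..n-1; pos j is the position
of robot j at time t (arbitrary for Byzantine robots); C is the set of correct robots.\<close>

definition snapshot :: "nat \<Rightarrow> (nat \<Rightarrow> real) \<Rightarrow> real list" where
  "snapshot n pos = sort (map pos [0..<n])"

text \<open>P_k, 1-indexed: the k-th smallest position of the snapshot.\<close>
definition P :: "nat \<Rightarrow> (nat \<Rightarrow> real) \<Rightarrow> nat \<Rightarrow> real" where
  "P n pos k = snapshot n pos ! (k - 1)"

definition elected :: "nat \<Rightarrow> nat \<Rightarrow> (nat \<Rightarrow> real) \<Rightarrow> nat \<Rightarrow> bool" where
  "elected n f pos i \<longleftrightarrow> pos i \<le> P n pos (f + 1) \<or> pos i \<ge> P n pos (n - f)"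

definition destination :: "nat \<Rightarrow> nat \<Rightarrow> (nat \<Rightarrow> real) \<Rightarrow> nat \<Rightarrow> real" where
  "destination n f pos i =
     (min (pos i) (P n pos (2 * f + 1)) + max (pos i) (P n pos (n - 2 * f))) / 2"

definition UD :: "nat set \<Rightarrow> (nat \<Rightarrow> real) \<Rightarrow> (nat \<Rightarrow> real) \<Rightarrow> real multiset" where
  "UD C pos dest = image_mset pos (mset_set C) + image_mset dest (mset_set C)"

end

theory Submission
  imports Defs
begin

text \<open>Let \<open>M = min UD(t)\<close>. At least \<open>2f + 1\<close> robots sit at or below \<open>P(2f + 1)\<close>, so one
  of them is correct and \<open>M \<le> P(2f + 1)\<close>; also \<open>M \<le> x_i\<close>. Hence the destination of \<open>i\<close> is the
  midpoint of a point \<open>\<ge> M\<close> and \<open>max x_i P(n - 2f)\<close>, so \<open>D_i < M + b\<close> forces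
  \<open>P(n - 2f) < M + 2b\<close>. At least \<open>n - 2f\<close> robots sit at or below \<open>P(n - 2f)\<close>; discarding the
  \<open>n - m\<close> faulty ones leaves \<open>m - 2f\<close> correct robots.\<close>

lemma sorted_length_filter_le_nth:
  fixes xs :: "'a::linorder list"
  assumes "sorted xs" and "k < length xs"
  shows "Suc k \<le> length (filter (\<lambda>x. x \<le> xs ! k) xs)"
proof -
  have "\<forall>x\<in>set (take (Suc k) xs). x \<le> xs ! k"
  proof
    fix x assume "x \<in> set (take (Suc k) xs)"
    then obtain l where "l < Suc k" "x = xs ! l"
      by (metis in_set_conv_nth length_take min_less_iff_conj nth_take)
    then show "x \<le> xs ! k"
      using assms by (simp add: sorted_nth_mono)
  qed
  then have "Suc k = length (filter (\<lambda>x. x \<le> xs ! k) (take (Suc k) xs))"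
    using assms(2) by simp
  also have "\<dots> \<le> length (filter (\<lambda>x. x \<le> xs ! k) xs)"
    by (metis append_take_drop_id filter_append length_append le_add1)
  finally show ?thesis .
qed

lemma length_filter_snapshot:
  "length (filter Q (snapshot n pos)) = card {j. j < n \<and> Q (pos j)}"
proof -
  have "length (filter Q (snapshot n pos)) = length (filter Q (map pos [0..<n]))"
    unfolding snapshot_def by (metis mset_filter mset_sort size_mset)
  also have "\<dots> = card {j. j < n \<and> Q (pos j)}"
    by (simp add: length_filter_conv_card cong: conj_cong)
  finally show ?thesis .
qed

lemma card_le_P:
  assumes "1 \<le> k" and "k \<le> n"
  shows "k \<le> card {j. j < n \<and> pos j \<le> P n pos k}"
  using sorted_length_filter_le_nth[of "snapshot n pos" "k - 1"] assms
  by (simp add: P_def snapshot_def length_filter_snapshot[unfolded snapshot_def])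

lemma card_correct_le_P:
  assumes "C \<subseteq> {..<n}" and "1 \<le> k" and "k \<le> n"
  shows "k - card ({..<n} - C) \<le> card {j \<in> C. pos j \<le> P n pos k}"
proof -
  let ?A = "{j. j < n \<and> pos j \<le> P n pos k}"
  have "card ?A = card (?A \<inter> C) + card (?A - C)"
    by (rule card_Int_Diff) simp
  also have "card (?A - C) \<le> card ({..<n} - C)"
    by (rule card_mono) auto
  also have "?A \<inter> C = {j \<in> C. pos j \<le> P n pos k}"
    using assms(1) by auto
  finally show ?thesis
    using card_le_P[OF assms(2,3), of pos] by linarith
qed

lemma lower_bound_le_P:
  assumes "C \<subseteq> {..<n}" and "card ({..<n} - C) < k" and "k \<le> n"
    and "\<And>j. j \<in> C \<Longrightarrow> L \<le> pos j"
  shows "L \<le> P n pos k"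
proof (rule ccontr)
  assume "\<not> L \<le> P n pos k"
  then have "{j \<in> C. pos j \<le> P n pos k} = {}"
    using assms(4) by force
  then have "card {j \<in> C. pos j \<le> P n pos k} = 0"
    by (simp only: card.empty)
  then have "k - card ({..<n} - C) \<le> 0"
    using card_correct_le_P[OF assms(1) _ assms(3), of pos] assms(2) by linarith
  then show False
    using assms(2) by simp
qed

lemma Min_UD_le_pos:
  assumes "finite C" and "j \<in> C"
  shows "Min_mset (UD C pos dest) \<le> pos j"
  using assms by (simp add: UD_def)

lemma midpoint_lt_imp:
  fixes M a c b :: real
  assumes "(a + c) / 2 < M + b" and "M \<le> a"
  shows "c < M + 2 * b"
proof -
  have "(a + c) / 2 = a / 2 + c / 2" by simp
  then show ?thesis using assms by linarith
qed

theorem lemma12: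
  fixes n f m :: nat and C :: "nat set" and pos dest :: "nat \<Rightarrow> real"
    and i :: nat and b :: real
  assumes "n > 5 * f"
    and "C \<subseteq> {..<n}" and "card C = m" and "n - m \<le> f"
    and "i \<in> C" and "elected n f pos i"
    and "b > 0"
    and "destination n f pos i < Min_mset (UD C pos dest) + b"
  shows "card {j \<in> C. pos j < Min_mset (UD C pos dest) + 2 * b} \<ge> m - 2 * f"
proof -
  define M where "M = Min_mset (UD C pos dest)"
  have finC: "finite C" using assms(2) finite_subset by blast
  have m_le_n: "m \<le> n"
    using assms(2,3) by (metis card_lessThan card_mono finite_lessThan)
  have faulty: "card ({..<n} - C) = n - m"
    using assms(2,3) finC by (simp add: card_Diff_subset)
  have M_le_pos: "\<And>j. j \<in> C \<Longrightarrow> M \<le> pos j"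
    unfolding M_def using finC by (rule Min_UD_le_pos)
  have "M \<le> P n pos (2 * f + 1)"
    using lower_bound_le_P[OF assms(2) _ _ M_le_pos] faulty assms(1,4) by simp
  with M_le_pos[OF assms(5)] have "max (pos i) (P n pos (n - 2 * f)) < M + 2 * b"
    using assms(8) unfolding destination_def M_def[symmetric]
    by (intro midpoint_lt_imp[of "min (pos i) (P n pos (2 * f + 1))"]) simp_all
  then have below: "{j \<in> C. pos j \<le> P n pos (n - 2 * f)} \<subseteq> {j \<in> C. pos j < M + 2 * b}"
    by auto
  have "m - 2 * f \<le> card {j \<in> C. pos j \<le> P n pos (n - 2 * f)}"
    using card_correct_le_P[OF assms(2), of "n - 2 * f" pos] faulty assms(1) m_le_n by simp
  also have "\<dots> \<le> card {j \<in> C. pos j < M + 2 * b}"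
    using finC below by (intro card_mono) auto
  finally show ?thesis
    unfolding M_def .
qed

end
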